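(* Let $k>t+1$, $n>2k-t$, and let $\mathcal{S}_p$ be a maximal set of $k$-spaces in $\mathrm{PG}(n,q)$ pairwise intersecting in at least a $t$-space. Let $\psi(\mathcal{S}_p)=\min\{\dim T: T\text{ a subspace of }\mathrm{PG}(n,q),\ \dim(T\cap\alpha)\geq t\ \forall\alpha\in\mathcal{S}_p\}$ and let $\mathcal{T}$ be the set of all $\psi(\mathcal{S}_p)$-dimensional subspaces meeting every element of $\mathcal{S}_p$ in at least a $t$-space. Then: (1) $t\leq\psi(\mathcal{S}_p)\leq k$, and if $\psi(\mathcal{S}_p)=t$ then $\mathcal{S}_p$ is a $t$-pencil; (2) if $T\in\mathcal{T}$, then all $k$-spaces containing $T$ belong to $\mathcal{S}_p$; (3) any two elements of $\mathcal{T}$ intersect in at least a $t$-space.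
   Context: Dimensions are projective; "intersect in at least a $t$-space" means the intersection has dimension at least $t$. Maximal means no further $k$-space can be added keeping the property. A $t$-pencil is the set of all $k$-spaces through a fixed $t$-space. *)

theory Defs
  imports Complex_Main "HOL-Library.Function_Algebras"
begin

text \<open>PG(n,q) is modelled as the lattice of linear subspaces of the vector space
  of functions 'm => 'a, where 'a is a finite field (q = CARD('a)) and
  'm is a finite index type with CARD('m) = n + 1.  Projective dimension
  of a linear subspace = vector space dimension - 1.\<close>

definition pscale :: "'a::field \<Rightarrow> ('m \<Rightarrow> 'a) \<Rightarrow> ('m \<Rightarrow> 'a)" where
  "pscale c v = (\<lambda>i. c * v i)"

definition psubspace :: "('m \<Rightarrow> 'a::field) set \<Rightarrow> bool" where
  "psubspace U \<longleftrightarrow> module.subspace (pscale :: 'a \<Rightarrow> _) U"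

definition pdim :: "('m \<Rightarrow> 'a::field) set \<Rightarrow> int" where
  "pdim U = int (vector_space.dim (pscale :: 'a \<Rightarrow> _) U) - 1"

definition kspace :: "nat \<Rightarrow> ('m \<Rightarrow> 'a::field) set \<Rightarrow> bool" where
  "kspace k U \<longleftrightarrow> psubspace U \<and> pdim U = int k"

definition t_intersecting :: "nat \<Rightarrow> nat \<Rightarrow> ('m \<Rightarrow> 'a::field) set set \<Rightarrow> bool" where
  "t_intersecting k t S \<longleftrightarrow> (\<forall>A\<in>S. kspace k A) \<and>
     (\<forall>A\<in>S. \<forall>B\<in>S. pdim (A \<inter> B) \<ge> int t)"

definition maximal_t_intersecting :: "nat \<Rightarrow> nat \<Rightarrow> ('m \<Rightarrow> 'a::field) set set \<Rightarrow> bool" where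
  "maximal_t_intersecting k t S \<longleftrightarrow> t_intersecting k t S \<and>
     (\<forall>U. kspace k U \<and> U \<notin> S \<longrightarrow> \<not> t_intersecting k t (insert U S))"

definition t_blocking :: "nat \<Rightarrow> ('m \<Rightarrow> 'a::field) set set \<Rightarrow> ('m \<Rightarrow> 'a) set \<Rightarrow> bool" where
  "t_blocking t S T \<longleftrightarrow> psubspace T \<and> (\<forall>\<alpha>\<in>S. pdim (T \<inter> \<alpha>) \<ge> int t)"

definition psi :: "nat \<Rightarrow> ('m \<Rightarrow> 'a::field) set set \<Rightarrow> int" where
  "psi t S = Min {pdim T | T. t_blocking t S T}"

definition psiT :: "nat \<Rightarrow> ('m \<Rightarrow> 'a::field) set set \<Rightarrow> ('m \<Rightarrow> 'a) set set" where
  "psiT t S = {T. t_blocking t S T \<and> pdim T = psi t S}"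

definition t_pencil :: "nat \<Rightarrow> nat \<Rightarrow> ('m \<Rightarrow> 'a::field) set set \<Rightarrow> bool" where
  "t_pencil k t S \<longleftrightarrow> (\<exists>P. kspace t P \<and> S = {U. kspace k U \<and> P \<subseteq> U})"

end

(* A k-space containing a subspace T that meets every member of S in at least a t-space
   meets every member in a t-space itself, so by maximality it belongs to S.  This is (2);
   and when psi = t such a T lies in every member of S, which makes S the pencil through T.
   For (3), suppose T1, T2 in psiT meet in less than a t-space.  Extending T1 and then T2 to
   k-spaces U1, U2 one vector at a time, always choosing a vector outside the current join
   while that join is not the whole space, keeps dim (U1 \<inter> U2) \<le> max (dim (T1 \<inter> T2)) (2k - n),
   which is less than t because n > 2k - t.  But U1, U2 \<in> S by (2), a contradiction. *)

theory Submission
  imports Defs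
begin

lemma (in finite_dimensional_vector_space) dim_span_Un_add_dim_Int:
  assumes "subspace A" "subspace B"
  shows "dim (span (A \<union> B)) + dim (A \<inter> B) = dim A + dim B"
proof -
  have spans: "span A = A" "span B = B"
    using assms by simp_all
  show ?thesis
    using dim_sums_Int[OF assms] by (simp add: span_Un spans)
qed

lemma (in finite_dimensional_vector_space) exists_vector_raising_dim_span_Un:
  assumes "dim V < dim UNIV"
  obtains v where "v \<notin> span V"
    and "min (dim UNIV) (dim (span (V \<union> W)) + 1) \<le> dim (span (insert v V \<union> W))"
proof (cases "span (V \<union> W) = UNIV")
  case True
  have "span V \<noteq> UNIV"
    using assms dim_eq_full[of V] by (force simp: dimension_def)
  then obtain v where v: "v \<notin> span V" by auto
  have "span (V \<union> W) \<subseteq> span (insert v V \<union> W)"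
    by (intro span_mono) auto
  then have "span (insert v V \<union> W) = UNIV"
    using True by auto
  then have "dim (span (insert v V \<union> W)) = dim UNIV"
    by (simp only:)
  with v that show ?thesis by simp
next
  case False
  then obtain v where v: "v \<notin> span (V \<union> W)" by auto
  then have "v \<notin> span V"
    using span_mono[of V "V \<union> W"] by auto
  moreover have "dim (span (insert v V \<union> W)) = dim (span (V \<union> W)) + 1"
    using v by (simp add: dim_insert)
  ultimately show ?thesis using that by simp
qed

lemma (in finite_dimensional_vector_space) exists_extension_with_large_span_Un:
  assumes "subspace V" "dim V \<le> K" "K \<le> dim UNIV"
  shows "\<exists>U. subspace U \<and> V \<subseteq> U \<and> dim U = K \<and>
    min (dim UNIV) (dim (span (V \<union> W)) + (K - dim V)) \<le> dim (span (U \<union> W))"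
  using assms
proof (induction "K - dim V" arbitrary: V)
  case 0
  then have "dim V = K" by linarith
  with "0.prems" show ?case by auto
next
  case (Suc m)
  then have lt: "dim V < K" by linarith
  obtain v where v: "v \<notin> span V"
    and raise: "min (dim UNIV) (dim (span (V \<union> W)) + 1) \<le> dim (span (insert v V \<union> W))"
    using exists_vector_raising_dim_span_Un[of V W] lt Suc.prems(3) by auto
  define V' where "V' = span (insert v V)"
  have dim_V': "dim V' = dim V + 1"
    using v by (simp add: V'_def dim_insert)
  have span_V'_W: "span (V' \<union> W) = span (insert v V \<union> W)"
    unfolding V'_def by (simp only: span_Un span_span)
  have "m = K - dim V'" "subspace V'" "dim V' \<le> K"
    using Suc.hyps(2) dim_V' lt by (simp_all add: V'_def)
  then obtain U where U: "subspace U" "V' \<subseteq> U" "dim U = K"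
    and large: "min (dim UNIV) (dim (span (V' \<union> W)) + (K - dim V')) \<le> dim (span (U \<union> W))"
    using Suc.hyps(1) Suc.prems(3) by blast
  have "V \<subseteq> V'"
    unfolding V'_def using span_superset[of "insert v V"] by blast
  moreover have "min (dim UNIV) (dim (span (V \<union> W)) + (K - dim V)) \<le> dim (span (U \<union> W))"
    using raise large lt unfolding span_V'_W dim_V' by linarith
  ultimately show ?case using U by blast
qed

lemma (in finite_dimensional_vector_space) exists_extension_with_small_Int:
  assumes "subspace V" "subspace W" "dim V \<le> K" "K \<le> dim UNIV"
  obtains U where "subspace U" "V \<subseteq> U" "dim U = K"
    and "dim (U \<inter> W) \<le> max (dim (V \<inter> W)) (K + dim W - dim UNIV)"
proof -
  obtain U where U: "subspace U" "V \<subseteq> U" "dim U = K"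
    and large: "min (dim UNIV) (dim (span (V \<union> W)) + (K - dim V)) \<le> dim (span (U \<union> W))"
    using exists_extension_with_large_span_Un[OF assms(1,3,4)] by blast
  have "dim (span (U \<union> W)) \<le> dim UNIV"
    by (rule dim_subset) simp
  then have "dim (U \<inter> W) \<le> max (dim (V \<inter> W)) (K + dim W - dim UNIV)"
    using large assms(3) U(3) dim_span_Un_add_dim_Int[OF assms(1,2)] dim_span_Un_add_dim_Int[OF U(1) assms(2)]
    by (simp only: min_le_iff_disj) linarith
  with U that show ?thesis by blast
qed

lemma (in finite_dimensional_vector_space) exists_extensions_with_small_Int:
  assumes "subspace T1" "subspace T2" "dim T1 \<le> K" "dim T2 \<le> K" "K \<le> dim UNIV"
  obtains U1 U2 where "subspace U1" "T1 \<subseteq> U1" "dim U1 = K"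
    and "subspace U2" "T2 \<subseteq> U2" "dim U2 = K"
    and "dim (U1 \<inter> U2) \<le> max (dim (T1 \<inter> T2)) (2 * K - dim UNIV)"
proof -
  obtain U1 where U1: "subspace U1" "T1 \<subseteq> U1" "dim U1 = K"
    and small1: "dim (U1 \<inter> T2) \<le> max (dim (T1 \<inter> T2)) (K + dim T2 - dim UNIV)"
    using exists_extension_with_small_Int[OF assms(1,2,3,5)] by blast
  obtain U2 where U2: "subspace U2" "T2 \<subseteq> U2" "dim U2 = K"
    and small2: "dim (U2 \<inter> U1) \<le> max (dim (T2 \<inter> U1)) (K + dim U1 - dim UNIV)"
    using exists_extension_with_small_Int[OF assms(2) U1(1) assms(4,5)] by blast
  have "dim (U1 \<inter> U2) \<le> max (dim (T1 \<inter> T2)) (2 * K - dim UNIV)"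
    using small1 small2 assms(4) U1(3) unfolding Int_commute[of U2] Int_commute[of T2] le_max_iff_disj
    by (elim disjE) linarith+
  with U1 U2 that show ?thesis by blast
qed

definition pbasis :: "'m \<Rightarrow> 'm \<Rightarrow> 'a::field" where
  "pbasis i = (\<lambda>j. if j = i then 1 else 0)"

lemma inj_pbasis: "inj (pbasis :: 'm \<Rightarrow> 'm \<Rightarrow> 'a::field)"
  by (auto simp: inj_def pbasis_def fun_eq_iff split: if_splits)

lemma sum_apply: "sum f A x = (\<Sum>a\<in>A. f a x)"
  by (induction A rule: infinite_finite_induct) auto

lemma pscale_pbasis_apply: "pscale c (pbasis j) i = (if i = j then c else (0::'a::field))"
  by (simp add: pscale_def pbasis_def)

lemma sum_pscale_pbasis:
  "(\<Sum>j\<in>UNIV. pscale (c j) (pbasis j)) = (c :: 'm::finite \<Rightarrow> 'a::field)"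
  by (simp add: fun_eq_iff sum_apply pscale_pbasis_apply)

lemma vector_space_pscale: "vector_space (pscale :: 'a::field \<Rightarrow> ('m \<Rightarrow> 'a) \<Rightarrow> _)"
  by unfold_locales (auto simp: pscale_def fun_eq_iff algebra_simps)

lemma finite_dimensional_vector_space_pscale:
  "finite_dimensional_vector_space (pscale :: 'a::field \<Rightarrow> ('m::finite \<Rightarrow> 'a) \<Rightarrow> _) (range pbasis)"
proof -
  interpret vector_space "pscale :: 'a \<Rightarrow> ('m \<Rightarrow> 'a) \<Rightarrow> _"
    by (rule vector_space_pscale)
  show ?thesis
  proof
    show "independent (range (pbasis :: 'm \<Rightarrow> 'm \<Rightarrow> 'a))"
      unfolding dependent_finite[OF finite_imageI[OF finite_UNIV]]
    proof (intro notI, elim exE conjE bexE)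
      fix u :: "('m \<Rightarrow> 'a) \<Rightarrow> 'a" and v
      assume zero: "(\<Sum>v\<in>range pbasis. pscale (u v) v) = 0"
        and "v \<in> range pbasis" and "u v \<noteq> 0"
      then obtain i where "v = pbasis i" "u (pbasis i) \<noteq> 0" by auto
      moreover have "(\<lambda>j. u (pbasis j)) = 0"
        using zero sum_pscale_pbasis[of "\<lambda>j. u (pbasis j)"] by (simp add: sum.reindex[OF inj_pbasis])
      ultimately show False by (simp add: fun_eq_iff)
    qed
    have "c \<in> span (range pbasis)" for c :: "'m \<Rightarrow> 'a"
      using span_sum[of UNIV "\<lambda>j. pscale (c j) (pbasis j)" "range pbasis"]
      by (simp add: sum_pscale_pbasis span_base span_scale)
    then show "span (range (pbasis :: 'm \<Rightarrow> 'm \<Rightarrow> 'a)) = UNIV" by auto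
  qed simp
qed

interpretation pv: finite_dimensional_vector_space
  "pscale :: 'a::field \<Rightarrow> ('m::finite \<Rightarrow> 'a) \<Rightarrow> _" "range pbasis"
  by (rule finite_dimensional_vector_space_pscale)

lemma card_range_pbasis [simp]: "card (range (pbasis :: 'm \<Rightarrow> 'm \<Rightarrow> 'a::field)) = card (UNIV :: 'm set)"
  by (simp add: card_image inj_pbasis)

lemma pv_dim_le_card: "pv.dim U \<le> card (UNIV :: 'm set)"
  for U :: "('m::finite \<Rightarrow> 'a::field) set"
  using pv.dim_subset[of U UNIV] by simp

lemma kspace_iff: "kspace k U \<longleftrightarrow> pv.subspace U \<and> pv.dim U = k + 1"
  for U :: "('m::finite \<Rightarrow> 'a::field) set"
  by (auto simp: kspace_def psubspace_def pdim_def)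

lemma int_le_pdim_iff: "int t \<le> pdim U \<longleftrightarrow> t < pv.dim U"
  for U :: "('m::finite \<Rightarrow> 'a::field) set"
  by (auto simp: pdim_def)

lemma pdim_mono: "A \<subseteq> B \<Longrightarrow> pdim A \<le> pdim B"
  for A B :: "('m::finite \<Rightarrow> 'a::field) set"
  using pv.dim_subset[of A B] by (simp add: pdim_def)

lemma finite_pdims: "finite {pdim U | U :: ('m::finite \<Rightarrow> 'a::field) set. P U}"
proof (rule finite_subset)
  have "pdim U \<in> {-1 .. int (card (UNIV :: 'm set))}" for U :: "('m \<Rightarrow> 'a) set"
    using pv_dim_le_card[of U] by (simp add: pdim_def)
  then show "{pdim U | U :: ('m \<Rightarrow> 'a) set. P U} \<subseteq> {-1 .. int (card (UNIV :: 'm set))}"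
    by blast
qed simp

lemma exists_kspace:
  assumes "k < card (UNIV :: 'm::finite set)"
  shows "\<exists>U :: ('m \<Rightarrow> 'a::field) set. kspace k U"
proof -
  have "k + 1 \<le> pv.dim (UNIV :: ('m \<Rightarrow> 'a) set)"
    using assms by simp
  then obtain U :: "('m \<Rightarrow> 'a) set" where "pv.subspace U" "pv.dim U = k + 1"
    by (rule pv.choose_subspace_of_subspace)
  then show ?thesis
    by (auto simp: kspace_iff)
qed

lemma t_blocking_of_mem: "t_intersecting k t S \<Longrightarrow> A \<in> S \<Longrightarrow> t_blocking t S A"
  by (auto simp: t_intersecting_def t_blocking_def kspace_def)

lemma int_le_pdim_of_t_blocking:
  fixes S :: "('m::finite \<Rightarrow> 'a::field) set set"
  assumes "t_blocking t S T" "A \<in> S"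
  shows "int t \<le> pdim T"
  using assms pdim_mono[of "T \<inter> A" T] by (force simp: t_blocking_def)

lemma superspace_of_t_blocking_mem:
  fixes S :: "('m::finite \<Rightarrow> 'a::field) set set"
  assumes max: "maximal_t_intersecting k t S" and "t \<le> k"
    and T: "t_blocking t S T" and U: "kspace k U" "T \<subseteq> U"
  shows "U \<in> S"
proof (rule ccontr)
  assume "U \<notin> S"
  have "int t \<le> pdim (U \<inter> A)" if "A \<in> S" for A
    using T that U(2) pdim_mono[of "T \<inter> A" "U \<inter> A"] by (force simp: t_blocking_def)
  then have "t_intersecting k t (insert U S)"
    using max U(1) \<open>t \<le> k\<close>
    by (auto simp: maximal_t_intersecting_def t_intersecting_def kspace_def Int_commute)
  with max U(1) \<open>U \<notin> S\<close> show False
    by (auto simp: maximal_t_intersecting_def)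
qed

lemma maximal_t_intersecting_nonempty:
  fixes S :: "('m::finite \<Rightarrow> 'a::field) set set"
  assumes max: "maximal_t_intersecting k t S" and "t \<le> k" and "k < card (UNIV :: 'm set)"
  shows "S \<noteq> {}"
proof
  assume "S = {}"
  obtain U :: "('m \<Rightarrow> 'a) set" where "kspace k U"
    using exists_kspace assms(3) by blast
  with max \<open>S = {}\<close> \<open>t \<le> k\<close> show False
    by (auto simp: maximal_t_intersecting_def t_intersecting_def kspace_def)
qed

lemma psi_le_pdim: "t_blocking t S T \<Longrightarrow> psi t S \<le> pdim T"
  for S :: "('m::finite \<Rightarrow> 'a::field) set set"
  unfolding psi_def by (rule Min_le) (auto intro: finite_pdims)

lemma psiT_nonempty:
  fixes S :: "('m::finite \<Rightarrow> 'a::field) set set"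
  assumes "t_blocking t S T0"
  obtains T where "T \<in> psiT t S"
proof -
  have "psi t S \<in> {pdim T | T. t_blocking t S T}"
    unfolding psi_def using assms by (intro Min_in finite_pdims) auto
  with that show ?thesis by (auto simp: psiT_def)
qed

lemma psi_bounds:
  fixes S :: "('m::finite \<Rightarrow> 'a::field) set set"
  assumes S: "t_intersecting k t S" and "A \<in> S"
  shows "int t \<le> psi t S" and "psi t S \<le> int k"
proof -
  have A: "t_blocking t S A"
    using t_blocking_of_mem[OF assms] .
  then obtain T where "T \<in> psiT t S"
    by (rule psiT_nonempty)
  then show "int t \<le> psi t S"
    using int_le_pdim_of_t_blocking[of t S T A] \<open>A \<in> S\<close> by (simp add: psiT_def)
  show "psi t S \<le> int k"
    using psi_le_pdim[OF A] S \<open>A \<in> S\<close> by (auto simp: t_intersecting_def kspace_def)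
qed

lemma t_pencil_if_psi_eq:
  fixes S :: "('m::finite \<Rightarrow> 'a::field) set set"
  assumes max: "maximal_t_intersecting k t S" and "t \<le> k" and "A \<in> S"
    and psi: "psi t S = int t"
  shows "t_pencil k t S"
proof -
  have S: "t_intersecting k t S"
    using max by (simp add: maximal_t_intersecting_def)
  obtain T where "T \<in> psiT t S"
    using psiT_nonempty t_blocking_of_mem[OF S \<open>A \<in> S\<close>] by blast
  then have T: "t_blocking t S T" "kspace t T"
    using psi by (auto simp: psiT_def t_blocking_def kspace_def)
  have "T \<subseteq> B" if "B \<in> S" for B
  proof -
    have "pv.subspace B"
      using S that by (simp add: t_intersecting_def kspace_def psubspace_def)
    moreover have "pv.dim T \<le> pv.dim (T \<inter> B)"
      using T that by (auto simp: t_blocking_def kspace_iff int_le_pdim_iff)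
    ultimately have "T \<inter> B = T"
      using T(2) by (intro pv.subspace_dim_equal pv.subspace_inter) (auto simp: kspace_iff)
    then show ?thesis by blast
  qed
  then have "S = {U. kspace k U \<and> T \<subseteq> U}"
    using S superspace_of_t_blocking_mem[OF max \<open>t \<le> k\<close> T(1)]
    by (auto simp: t_intersecting_def)
  with T(2) show ?thesis
    unfolding t_pencil_def by blast
qed

lemma int_le_pdim_Int_of_t_blocking:
  fixes S :: "('m::finite \<Rightarrow> 'a::field) set set"
  assumes max: "maximal_t_intersecting k t S" and "t \<le> k"
    and n: "int (card (UNIV :: 'm set)) - 1 > 2 * int k - int t"
    and T1: "t_blocking t S T1" "pdim T1 \<le> int k"
    and T2: "t_blocking t S T2" "pdim T2 \<le> int k"
  shows "int t \<le> pdim (T1 \<inter> T2)"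
proof -
  have "pv.subspace T1" "pv.subspace T2" "pv.dim T1 \<le> k + 1" "pv.dim T2 \<le> k + 1"
    using T1 T2 by (auto simp: t_blocking_def psubspace_def pdim_def)
  moreover have "k + 1 \<le> pv.dim (UNIV :: ('m \<Rightarrow> 'a) set)"
    using n \<open>t \<le> k\<close> by simp
  ultimately obtain U1 U2 where U: "kspace k U1" "T1 \<subseteq> U1" "kspace k U2" "T2 \<subseteq> U2"
    and small: "pv.dim (U1 \<inter> U2) \<le> max (pv.dim (T1 \<inter> T2)) (2 * (k + 1) - pv.dim (UNIV :: ('m \<Rightarrow> 'a) set))"
    by (rule pv.exists_extensions_with_small_Int) (auto simp: kspace_iff)
  have "U1 \<in> S" "U2 \<in> S"
    using superspace_of_t_blocking_mem[OF max \<open>t \<le> k\<close>] T1 T2 U by auto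
  then have "t < pv.dim (U1 \<inter> U2)"
    using max by (auto simp: maximal_t_intersecting_def t_intersecting_def int_le_pdim_iff)
  moreover have "2 * (k + 1) - pv.dim (UNIV :: ('m \<Rightarrow> 'a) set) \<le> t"
    using n by simp
  ultimately show ?thesis
    using small by (simp add: int_le_pdim_iff)
qed

theorem mainTheorem8:
  fixes S :: "('m::finite \<Rightarrow> 'a::field) set set" and k t :: nat
  assumes fin: "finite (UNIV :: 'a set)"
    and kt: "k > t + 1"
    and nk: "int (card (UNIV :: 'm set)) - 1 > 2 * int k - int t"
    and max: "maximal_t_intersecting k t S"
  shows "(int t \<le> psi t S \<and> psi t S \<le> int k \<and> (psi t S = int t \<longrightarrow> t_pencil k t S))
    \<and> (\<forall>T\<in>psiT t S. \<forall>U. kspace k U \<and> T \<subseteq> U \<longrightarrow> U \<in> S)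
    \<and> (\<forall>T1\<in>psiT t S. \<forall>T2\<in>psiT t S. pdim (T1 \<inter> T2) \<ge> int t)"
proof -
  have S: "t_intersecting k t S"
    using max by (simp add: maximal_t_intersecting_def)
  have "t \<le> k"
    using kt by simp
  moreover have "k < card (UNIV :: 'm set)"
    using nk kt by linarith
  ultimately obtain A where "A \<in> S"
    using maximal_t_intersecting_nonempty[OF max] by blast
  show ?thesis
    using psi_bounds[OF S \<open>A \<in> S\<close>] t_pencil_if_psi_eq[OF max \<open>t \<le> k\<close> \<open>A \<in> S\<close>]
      superspace_of_t_blocking_mem[OF max \<open>t \<le> k\<close>]
      int_le_pdim_Int_of_t_blocking[OF max \<open>t \<le> k\<close> nk]
    by (auto simp: psiT_def)
qed

end
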